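(* Let $\mathbf{F}$ and $\mathbf{E}$ be normed spaces of functions over a set $X$, with $\mathbf{F}$ being $1$-independent. Then: (i) if $\mathbf{E}$ is regular, then so is $Mult(\mathbf{F},\mathbf{E})$; (ii) $Mult(\mathbf{F},\mathbf{E})\subset Mult(\widehat{\mathbf{F}},\widehat{\mathbf{E}})$ and $\|\omega\|_{Mult(\widehat{\mathbf{F}},\widehat{\mathbf{E}})}\le\|\omega\|_{Mult(\mathbf{F},\mathbf{E})}$ for all $\omega\in Mult(\mathbf{F},\mathbf{E})$.
   Context: $\mathcal{F}(X)$ is the space of all functions $X\to\mathbb{C}$ with the topology of pointwise convergence. A normed space of functions (NSF) over $X$ is a linear subspace of $\mathcal{F}(X)$ with a norm for which every point evaluation is bounded; it is $1$-independent if for each $x$ some $f\in\mathbf{F}$ has $f(x)\ne0$, and regular if its closed unit ball is closed in $\mathcal{F}(X)$. For an NSF $\mathbf{F}$, let $C_{\mathbf{F}}$ be the closure in $\mathcal{F}(X)$ of the unit ball of $\mathbf{F}$; $\widehat{\mathbf{F}}=\{\alpha f:\alpha>0,\ f\in C_{\mathbf{F}}\}$ is the NSF over $X$ whose closed unit ball is $C_{\mathbf{F}}$ (norm = Minkowski functional of $C_{\mathbf{F}}$). $Mult(\mathbf{F},\mathbf{E})$ is the set of $\omega:X\to\mathbb{C}$ with $\omega f\in\mathbf{E}$ for all $f\in\mathbf{F}$ and $M_\omega:f\mapsto\omega f$ bounded $\mathbf{F}\to\mathbf{E}$, normed by $\|M_\omega\|$ (a normed space of functions over $X$ when $\mathbf{F}$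 is $1$-independent). *)

theory Defs
  imports "HOL-Analysis.Analysis"
begin

text \<open>A normed space of functions over X (X = UNIV of type 'x) is represented by a
carrier set V of functions 'x => complex together with a norm N.  The space
'x => complex carries the product topology (pointwise convergence), which is the
library's topological_space instance for function types.\<close>

definition nsf :: "('x \<Rightarrow> complex) set \<Rightarrow> (('x \<Rightarrow> complex) \<Rightarrow> real) \<Rightarrow> bool" where
  "nsf V N \<longleftrightarrow>
     (\<lambda>x. 0) \<in> V \<and>
     (\<forall>f\<in>V. \<forall>g\<in>V. (\<lambda>x. f x + g x) \<in> V) \<and>
     (\<forall>f\<in>V. \<forall>c::complex. (\<lambda>x. c * f x) \<in> V) \<and>
     (\<forall>f\<in>V. 0 \<le> N f) \<and>
     (\<forall>f\<in>V. N f = 0 \<longleftrightarrow> f = (\<lambda>x. 0)) \<and>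
     (\<forall>f\<in>V. \<forall>c::complex. N (\<lambda>x. c * f x) = cmod c * N f) \<and>
     (\<forall>f\<in>V. \<forall>g\<in>V. N (\<lambda>x. f x + g x) \<le> N f + N g) \<and>
     (\<forall>x. \<exists>C. \<forall>f\<in>V. cmod (f x) \<le> C * N f)"

definition one_independent :: "('x \<Rightarrow> complex) set \<Rightarrow> bool" where
  "one_independent V \<longleftrightarrow> (\<forall>x. \<exists>f\<in>V. f x \<noteq> 0)"

definition unit_ball_nsf :: "('x \<Rightarrow> complex) set \<Rightarrow> (('x \<Rightarrow> complex) \<Rightarrow> real) \<Rightarrow> ('x \<Rightarrow> complex) set" where
  "unit_ball_nsf V N = {f \<in> V. N f \<le> 1}"

definition regular_nsf :: "('x \<Rightarrow> complex) set \<Rightarrow> (('x \<Rightarrow> complex) \<Rightarrow> real) \<Rightarrow> bool" where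
  "regular_nsf V N \<longleftrightarrow> closed (unit_ball_nsf V N)"

definition C_nsf :: "('x \<Rightarrow> complex) set \<Rightarrow> (('x \<Rightarrow> complex) \<Rightarrow> real) \<Rightarrow> ('x \<Rightarrow> complex) set" where
  "C_nsf V N = closure (unit_ball_nsf V N)"

definition hat_space :: "('x \<Rightarrow> complex) set \<Rightarrow> (('x \<Rightarrow> complex) \<Rightarrow> real) \<Rightarrow> ('x \<Rightarrow> complex) set" where
  "hat_space V N = {(\<lambda>x. complex_of_real a * f x) | a f. a > 0 \<and> f \<in> C_nsf V N}"

definition hat_norm :: "('x \<Rightarrow> complex) set \<Rightarrow> (('x \<Rightarrow> complex) \<Rightarrow> real) \<Rightarrow> ('x \<Rightarrow> complex) \<Rightarrow> real" where
  "hat_norm V N g = Inf {a. a > 0 \<and> (\<exists>f\<in>C_nsf V N. g = (\<lambda>x. complex_of_real a * f x))}"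

definition mult_space :: "('x \<Rightarrow> complex) set \<Rightarrow> (('x \<Rightarrow> complex) \<Rightarrow> real) \<Rightarrow>
    ('x \<Rightarrow> complex) set \<Rightarrow> (('x \<Rightarrow> complex) \<Rightarrow> real) \<Rightarrow> ('x \<Rightarrow> complex) set" where
  "mult_space V N W M = {\<omega>. (\<forall>f\<in>V. (\<lambda>x. \<omega> x * f x) \<in> W) \<and>
                             (\<exists>C. \<forall>f\<in>V. M (\<lambda>x. \<omega> x * f x) \<le> C * N f)}"

definition mult_norm :: "('x \<Rightarrow> complex) set \<Rightarrow> (('x \<Rightarrow> complex) \<Rightarrow> real) \<Rightarrow>
    (('x \<Rightarrow> complex) \<Rightarrow> real) \<Rightarrow> ('x \<Rightarrow> complex) \<Rightarrow> real" where
  "mult_norm V N M \<omega> = Inf {C. 0 \<le> C \<and> (\<forall>f\<in>V. M (\<lambda>x. \<omega> x * f x) \<le> C * N f)}"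

end

theory Submission
  imports Defs
begin

text \<open>Multiplication by a fixed function is continuous for pointwise convergence. For (i),
the unit ball of Mult(F,E) is the intersection over f \<in> F of the sets of \<omega> with
\<omega>f \<in> \<parallel>f\<parallel> B_E, each the preimage under \<omega> \<mapsto> \<omega>f of a closed ball of the regular
space E. For (ii), a multiplier with bound C maps B_F into C B_E, hence by continuity
C_F into C C_E, which is exactly the multiplier estimate between the hat spaces.\<close>

lemma continuous_on_pointwise_mult:
  "continuous_on UNIV (\<lambda>h::'x \<Rightarrow> 'a::real_normed_algebra. \<lambda>x. \<omega> x * h x)"
  by (intro continuous_on_coordinatewise_then_product continuous_intros
      continuous_on_product_coordinates)

lemma nsf_norm_nonneg: "nsf V N \<Longrightarrow> f \<in> V \<Longrightarrow> 0 \<le> N f"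
  unfolding nsf_def by blast

lemma nsf_norm_eq_0_iff: "nsf V N \<Longrightarrow> f \<in> V \<Longrightarrow> N f = 0 \<longleftrightarrow> f = (\<lambda>x. 0)"
  unfolding nsf_def by blast

lemma nsf_zero: "nsf V N \<Longrightarrow> (\<lambda>x. 0) \<in> V"
  unfolding nsf_def by blast

lemma nsf_scale:
  assumes "nsf V N" "f \<in> V"
  shows "(\<lambda>x. c * f x) \<in> V" "N (\<lambda>x. c * f x) = cmod c * N f"
  using assms unfolding nsf_def by blast+

lemma nsf_scale_of_real:
  assumes "nsf V N" "f \<in> V" "0 \<le> a"
  shows "(\<lambda>x. complex_of_real a * f x) \<in> V" "N (\<lambda>x. complex_of_real a * f x) = a * N f"
  using nsf_scale[OF assms(1,2)] assms(3) by auto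

lemma regular_nsf_closed_ball_pos:
  assumes W: "nsf W M" and reg: "regular_nsf W M" and r: "0 < r"
  shows "closed {g \<in> W. M g \<le> r}"
proof -
  let ?shrink = "\<lambda>g::'x \<Rightarrow> complex. \<lambda>x. complex_of_real (inverse r) * g x"
  have "g \<in> W \<and> M g \<le> r \<longleftrightarrow> ?shrink g \<in> unit_ball_nsf W M" for g
  proof
    assume g: "g \<in> W \<and> M g \<le> r"
    then have "inverse r * M g \<le> 1"
      using r by (simp add: field_simps)
    then show "?shrink g \<in> unit_ball_nsf W M"
      using nsf_scale_of_real[OF W, of g "inverse r"] g r by (simp add: unit_ball_nsf_def)
  next
    assume "?shrink g \<in> unit_ball_nsf W M"
    moreover have "g = (\<lambda>x. complex_of_real r * ?shrink g x)"
      using r by auto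
    ultimately show "g \<in> W \<and> M g \<le> r"
      using nsf_scale_of_real[OF W, of "?shrink g" r] r by (auto simp: unit_ball_nsf_def)
  qed
  then have "{g \<in> W. M g \<le> r} = ?shrink -` unit_ball_nsf W M"
    by blast
  moreover have "closed (?shrink -` unit_ball_nsf W M)"
    by (rule closed_vimage[OF _ continuous_on_pointwise_mult])
      (use reg in \<open>simp add: regular_nsf_def\<close>)
  ultimately show ?thesis
    by simp
qed

lemma regular_nsf_closed_ball:
  assumes W: "nsf W M" and reg: "regular_nsf W M" and r: "0 \<le> r"
  shows "closed {g \<in> W. M g \<le> r}"
proof -
  \<comment> \<open>The library has no T1 instance for function spaces, so the closedness of the
    ball of radius 0 is obtained from the balls of positive radius.\<close>
  have "{g \<in> W. M g \<le> r} = (\<Inter>s\<in>{r<..}. {g \<in> W. M g \<le> s})"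
  proof (intro equalityI subsetI)
    fix g assume "g \<in> (\<Inter>s\<in>{r<..}. {g \<in> W. M g \<le> s})"
    then have "g \<in> W" "\<And>s. r < s \<Longrightarrow> M g \<le> s"
      by auto (use gt_ex in blast)
    then show "g \<in> {g \<in> W. M g \<le> r}"
      by (auto intro: dense_ge)
  qed auto
  then show ?thesis
    using regular_nsf_closed_ball_pos[OF W reg] r by (auto intro!: closed_INT)
qed

lemma mult_norm_le:
  assumes "0 \<le> C" "\<forall>f\<in>V. M (\<lambda>x. \<omega> x * f x) \<le> C * N f"
  shows "mult_norm V N M \<omega> \<le> C"
  unfolding mult_norm_def
  by (rule cInf_lower) (use assms in \<open>auto intro: bdd_belowI[of _ 0]\<close>)

lemma mult_norm_nonneg_bound:
  assumes V: "nsf V N" and W: "nsf W M" and \<omega>: "\<omega> \<in> mult_space V N W M"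
  shows "0 \<le> mult_norm V N M \<omega>"
    and "f \<in> V \<Longrightarrow> M (\<lambda>x. \<omega> x * f x) \<le> mult_norm V N M \<omega> * N f"
proof -
  let ?bounds = "{C. 0 \<le> C \<and> (\<forall>f\<in>V. M (\<lambda>x. \<omega> x * f x) \<le> C * N f)}"
  obtain C where C: "\<forall>f\<in>V. M (\<lambda>x. \<omega> x * f x) \<le> C * N f"
    using \<omega> unfolding mult_space_def by blast
  have "M (\<lambda>x. \<omega> x * f x) \<le> max C 0 * N f" if "f \<in> V" for f
    using C mult_right_mono[OF max.cobounded1 nsf_norm_nonneg[OF V that]] that
    by (meson order_trans)
  then have "max C 0 \<in> ?bounds"
    by simp
  then have nonempty: "?bounds \<noteq> {}"
    by blast
  show "0 \<le> mult_norm V N M \<omega>"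
    unfolding mult_norm_def by (rule cInf_greatest[OF nonempty]) auto
  assume f: "f \<in> V"
  show "M (\<lambda>x. \<omega> x * f x) \<le> mult_norm V N M \<omega> * N f"
  proof (cases "N f = 0")
    case True
    then show ?thesis
      using nsf_norm_eq_0_iff[OF V f] nsf_norm_eq_0_iff[OF W nsf_zero[OF W]] by simp
  next
    case False
    then have pos: "0 < N f"
      using nsf_norm_nonneg[OF V f] by linarith
    have "M (\<lambda>x. \<omega> x * f x) / N f \<le> mult_norm V N M \<omega>"
      unfolding mult_norm_def
      by (rule cInf_greatest[OF nonempty]) (use f pos in \<open>auto simp: divide_le_eq\<close>)
    then show ?thesis
      using pos by (simp add: divide_le_eq mult.commute)
  qed
qed

lemma mult_norm_le_iff:
  assumes V: "nsf V N" and W: "nsf W M" and C: "0 \<le> C"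
  shows "\<omega> \<in> mult_space V N W M \<and> mult_norm V N M \<omega> \<le> C \<longleftrightarrow>
    (\<forall>f\<in>V. (\<lambda>x. \<omega> x * f x) \<in> W \<and> M (\<lambda>x. \<omega> x * f x) \<le> C * N f)"
proof
  assume \<omega>: "\<omega> \<in> mult_space V N W M \<and> mult_norm V N M \<omega> \<le> C"
  show "\<forall>f\<in>V. (\<lambda>x. \<omega> x * f x) \<in> W \<and> M (\<lambda>x. \<omega> x * f x) \<le> C * N f"
  proof
    fix f assume f: "f \<in> V"
    have "M (\<lambda>x. \<omega> x * f x) \<le> mult_norm V N M \<omega> * N f"
      using mult_norm_nonneg_bound(2)[OF V W _ f] \<omega> by blast
    also have "\<dots> \<le> C * N f"
      using \<omega> nsf_norm_nonneg[OF V f] by (blast intro: mult_right_mono)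
    finally show "(\<lambda>x. \<omega> x * f x) \<in> W \<and> M (\<lambda>x. \<omega> x * f x) \<le> C * N f"
      using \<omega> f by (simp add: mult_space_def)
  qed
next
  assume "\<forall>f\<in>V. (\<lambda>x. \<omega> x * f x) \<in> W \<and> M (\<lambda>x. \<omega> x * f x) \<le> C * N f"
  then show "\<omega> \<in> mult_space V N W M \<and> mult_norm V N M \<omega> \<le> C"
    using C by (auto simp: mult_space_def intro: mult_norm_le)
qed

lemma unit_ball_mult_space:
  assumes "nsf V N" "nsf W M"
  shows "unit_ball_nsf (mult_space V N W M) (mult_norm V N M) =
    (\<Inter>f\<in>V. (\<lambda>\<omega> x. \<omega> x * f x) -` {g \<in> W. M g \<le> N f})"
  using mult_norm_le_iff[OF assms, of 1] by (auto simp: unit_ball_nsf_def)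

lemma regular_mult_space:
  assumes V: "nsf V N" and W: "nsf W M" and reg: "regular_nsf W M"
  shows "regular_nsf (mult_space V N W M) (mult_norm V N M)"
  unfolding regular_nsf_def unit_ball_mult_space[OF V W]
proof (intro closed_INT ballI closed_vimage)
  fix f assume "f \<in> V"
  then show "closed {g \<in> W. M g \<le> N f}"
    using regular_nsf_closed_ball[OF W reg] nsf_norm_nonneg[OF V] by blast
  show "continuous_on UNIV (\<lambda>\<omega> x. \<omega> x * f x)"
    using continuous_on_pointwise_mult[of f] by (simp add: mult.commute)
qed

lemma contractive_multiplier_C_nsf:
  assumes contr: "\<forall>f\<in>V. (\<lambda>x. \<omega> x * f x) \<in> W \<and> M (\<lambda>x. \<omega> x * f x) \<le> N f"
    and h: "h \<in> C_nsf V N"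
  shows "(\<lambda>x. \<omega> x * h x) \<in> C_nsf W M"
proof -
  have "(\<lambda>h x. \<omega> x * h x) ` unit_ball_nsf V N \<subseteq> closure (unit_ball_nsf W M)"
    using contr closure_subset by (fastforce simp: unit_ball_nsf_def)
  then have "(\<lambda>h x. \<omega> x * h x) ` closure (unit_ball_nsf V N) \<subseteq> closure (unit_ball_nsf W M)"
    by (intro image_closure_subset continuous_on_subset[OF continuous_on_pointwise_mult]) auto
  then show ?thesis
    using h unfolding C_nsf_def by blast
qed

lemma in_hat_space:
  assumes "0 < a" "h \<in> C_nsf V N"
  shows "(\<lambda>x. complex_of_real a * h x) \<in> hat_space V N"
  unfolding hat_space_def using assms by blast

lemma hat_norm_le:
  assumes "0 < a" "h \<in> C_nsf V N" "g = (\<lambda>x. complex_of_real a * h x)"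
  shows "hat_norm V N g \<le> a"
  unfolding hat_norm_def
  by (rule cInf_lower) (use assms in \<open>auto intro: bdd_belowI[of _ 0]\<close>)

lemma le_hat_norm:
  assumes "g \<in> hat_space V N"
    and "\<And>a h. 0 < a \<Longrightarrow> h \<in> C_nsf V N \<Longrightarrow> g = (\<lambda>x. complex_of_real a * h x) \<Longrightarrow> b \<le> a"
  shows "b \<le> hat_norm V N g"
  unfolding hat_norm_def
  by (rule cInf_greatest) (use assms in \<open>auto simp: hat_space_def\<close>)

lemma multiplier_hat_space:
  assumes W: "nsf W M" and C: "0 < C"
    and bound: "\<forall>f\<in>V. (\<lambda>x. \<omega> x * f x) \<in> W \<and> M (\<lambda>x. \<omega> x * f x) \<le> C * N f"
    and g: "g \<in> hat_space V N"
  shows "(\<lambda>x. \<omega> x * g x) \<in> hat_space W M"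
    and "hat_norm W M (\<lambda>x. \<omega> x * g x) \<le> C * hat_norm V N g"
proof -
  define \<omega>' where "\<omega>' = (\<lambda>x. complex_of_real (inverse C) * \<omega> x)"
  have contr: "\<forall>f\<in>V. (\<lambda>x. \<omega>' x * f x) \<in> W \<and> M (\<lambda>x. \<omega>' x * f x) \<le> N f"
  proof
    fix f assume f: "f \<in> V"
    have eq: "(\<lambda>x. \<omega>' x * f x) = (\<lambda>x. complex_of_real (inverse C) * (\<omega> x * f x))"
      by (simp add: \<omega>'_def mult.assoc)
    have \<omega>f: "(\<lambda>x. \<omega> x * f x) \<in> W" "M (\<lambda>x. \<omega> x * f x) \<le> C * N f"
      using bound f by blast+
    have "inverse C * M (\<lambda>x. \<omega> x * f x) \<le> inverse C * (C * N f)"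
      using \<omega>f(2) C by (intro mult_left_mono) auto
    also have "\<dots> = N f"
      using C by simp
    finally show "(\<lambda>x. \<omega>' x * f x) \<in> W \<and> M (\<lambda>x. \<omega>' x * f x) \<le> N f"
      unfolding eq using nsf_scale_of_real[OF W \<omega>f(1), of "inverse C"] C by simp
  qed
  have rep: "(\<lambda>x. \<omega> x * g x) \<in> hat_space W M \<and> hat_norm W M (\<lambda>x. \<omega> x * g x) \<le> C * a"
    if a: "0 < a" and h: "h \<in> C_nsf V N" and g_eq: "g = (\<lambda>x. complex_of_real a * h x)" for a h
  proof -
    have k: "(\<lambda>x. \<omega>' x * h x) \<in> C_nsf W M"
      by (rule contractive_multiplier_C_nsf[OF contr h])
    have "complex_of_real C \<noteq> 0"
      using C by simp
    then have eq: "(\<lambda>x. \<omega> x * g x) = (\<lambda>x. complex_of_real (C * a) * (\<omega>' x * h x))"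
      by (simp add: g_eq \<omega>'_def field_simps)
    have Ca: "0 < C * a"
      using C a by simp
    have "(\<lambda>x. \<omega> x * g x) \<in> hat_space W M"
      unfolding eq by (rule in_hat_space[OF Ca k])
    then show ?thesis
      using hat_norm_le[OF Ca k eq] by blast
  qed
  obtain a h where "0 < a" "h \<in> C_nsf V N" "g = (\<lambda>x. complex_of_real a * h x)"
    using g unfolding hat_space_def by blast
  then show "(\<lambda>x. \<omega> x * g x) \<in> hat_space W M"
    using rep by blast
  have "hat_norm W M (\<lambda>x. \<omega> x * g x) / C \<le> hat_norm V N g"
  proof (rule le_hat_norm[OF g])
    fix a h assume "0 < a" "h \<in> C_nsf V N" "g = (\<lambda>x. complex_of_real a * h x)"
    then have "hat_norm W M (\<lambda>x. \<omega> x * g x) \<le> a * C"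
      using rep mult.commute[of C a] by metis
    then show "hat_norm W M (\<lambda>x. \<omega> x * g x) / C \<le> a"
      by (simp add: pos_divide_le_eq[OF C])
  qed
  then show "hat_norm W M (\<lambda>x. \<omega> x * g x) \<le> C * hat_norm V N g"
    by (simp add: pos_divide_le_eq[OF C] mult.commute)
qed

lemma mult_space_hat:
  assumes V: "nsf V N" and W: "nsf W M" and \<omega>: "\<omega> \<in> mult_space V N W M"
    and C: "mult_norm V N M \<omega> < C"
  shows "\<omega> \<in> mult_space (hat_space V N) (hat_norm V N) (hat_space W M) (hat_norm W M)"
    and "mult_norm (hat_space V N) (hat_norm V N) (hat_norm W M) \<omega> \<le> C"
proof -
  have C_pos: "0 < C"
    using mult_norm_nonneg_bound(1)[OF V W \<omega>] C by linarith
  have "\<forall>f\<in>V. (\<lambda>x. \<omega> x * f x) \<in> W \<and> M (\<lambda>x. \<omega> x * f x) \<le> C * N f"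
    using mult_norm_le_iff[OF V W, of C \<omega>] \<omega> C C_pos by simp
  note hat = multiplier_hat_space[OF W C_pos this]
  show "\<omega> \<in> mult_space (hat_space V N) (hat_norm V N) (hat_space W M) (hat_norm W M)"
    using hat unfolding mult_space_def by blast
  show "mult_norm (hat_space V N) (hat_norm V N) (hat_norm W M) \<omega> \<le> C"
    using hat C_pos by (intro mult_norm_le) auto
qed

theorem proposition5p5:
  fixes V W :: "('x \<Rightarrow> complex) set" and N M :: "('x \<Rightarrow> complex) \<Rightarrow> real"
  assumes "nsf V N" and "nsf W M" and "one_independent V"
  shows "(regular_nsf W M \<longrightarrow> regular_nsf (mult_space V N W M) (mult_norm V N M))
    \<and> mult_space V N W M \<subseteq> mult_space (hat_space V N) (hat_norm V N) (hat_space W M) (hat_norm W M)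
    \<and> (\<forall>\<omega>\<in>mult_space V N W M.
         mult_norm (hat_space V N) (hat_norm V N) (hat_norm W M) \<omega> \<le> mult_norm V N M \<omega>)"
  \<comment> \<open>1-independence only makes Mult(F,E) a normed space of functions; neither claim needs it.\<close>
proof (intro conjI impI subsetI ballI)
  show "regular_nsf (mult_space V N W M) (mult_norm V N M)" if "regular_nsf W M"
    using regular_mult_space[OF assms(1,2) that] .
next
  fix \<omega> assume \<omega>: "\<omega> \<in> mult_space V N W M"
  show "\<omega> \<in> mult_space (hat_space V N) (hat_norm V N) (hat_space W M) (hat_norm W M)"
    using mult_space_hat(1)[OF assms(1,2) \<omega>, of "mult_norm V N M \<omega> + 1"] by simp
  show "mult_norm (hat_space V N) (hat_norm V N) (hat_norm W M) \<omega> \<le> mult_norm V N M \<omega>"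
    using mult_space_hat(2)[OF assms(1,2) \<omega>] by (rule dense_ge)
qed

end
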